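(* Let $T>0$, $r>0$, $\sigma>0$, $q_S,\gamma_S\in\mathbb{R}$, $\lambda_B,\lambda_C\ge 0$ with $\lambda_B+\lambda_C>0$, $R_B,R_C\in[0,1]$ and $s_F\in\mathbb{R}$. Let $H:(0,\infty)\to[0,\infty)$ be a non-negative, locally bounded payoff function with at most linear growth at infinity, and let $V$ be the risk-free Black-Scholes price of the contract with payoff $H$, i.e. the solution of $$\frac{\partial V}{\partial t}+\mathcal{A}V-rV=0 \text{ in } (0,T)\times(0,\infty),\qquad V(T,S)=H(S),$$ where $\mathcal{A}=\frac12\sigma^2S^2\frac{\partial^2}{\partial S^2}+(q_S-\gamma_S)S\frac{\partial}{\partial S}$. Consider the linear final value problem for the adjusted price $U$: $$\frac{\partial U}{\partial t}+\mathcal{A}U-(r+\lambda_B+\lambda_C)U=(R_B\lambda_B+\lambda_C)V^--(\lambda_B+R_C\lambda_C)V^++s_FV^+ \text{ in }(0,T)\times(0,\infty),\qquad U(T,S)=H(S),$$ where $\varphi^+=\max(\varphi,0)$ and $\varphi^-=\max(-\varphi,0)$. Then $V\ge 0$ and the adjusted price is given by $$U(t,S)=\frac{\big((1-R_C)\lambda_C+s_F\big)\mathrm{e}^{-(\lambda_B+\lambda_C)(T-t)}+\lambda_B+R_C\lambda_C-s_F}{\lambda_B+\lambda_C}\,V(t,S).$$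
   Context: Here $V$ is the classical risk-free price (e.g. $V(t,S)=\mathrm{e}^{-r(T-t)}\int_{\mathbb{R}}H\big(S\mathrm{e}^{(q_S-\gamma_S-\sigma^2/2)(T-t)+\sigma\sqrt{T-t}\,z}\big)\frac{\mathrm{e}^{-z^2/2}}{\sqrt{2\pi}}\,\mathrm{d}z$). The parameters $\lambda_B,\lambda_C$ are default intensities of the issuer and counterparty, $R_B,R_C$ recovery rates, and $s_F$ a funding spread; this PDE models the adjusted price when the mark-to-market value at default is taken to be $V$. *)

theory Defs
  imports "HOL-Analysis.Analysis"
begin

definition bs_price :: "real \<Rightarrow> real \<Rightarrow> real \<Rightarrow> real \<Rightarrow> real \<Rightarrow> (real \<Rightarrow> real) \<Rightarrow> real \<Rightarrow> real \<Rightarrow> real" where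
  "bs_price r qS gS \<sigma> T H t S =
     exp (- r * (T - t)) *
     (LINT z|lborel. H (S * exp ((qS - gS - \<sigma>\<^sup>2 / 2) * (T - t) + \<sigma> * sqrt (T - t) * z))
                      * (exp (- z\<^sup>2 / 2) / sqrt (2 * pi)))"

definition fvp_solution ::
  "real \<Rightarrow> real \<Rightarrow> real \<Rightarrow> real \<Rightarrow> (real \<Rightarrow> real \<Rightarrow> real) \<Rightarrow> (real \<Rightarrow> real)
     \<Rightarrow> (real \<Rightarrow> real \<Rightarrow> real) \<Rightarrow> bool" where
  "fvp_solution T \<sigma> \<mu> k F G U \<longleftrightarrow>
     (\<forall>S>0. U T S = G S) \<and>
     (\<exists>Ut Us Uss. \<forall>t\<in>{0<..<T}. \<forall>S>0.
        ((\<lambda>\<tau>. U \<tau> S) has_real_derivative Ut t S) (at t) \<and>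
        ((\<lambda>x. U t x) has_real_derivative Us t S) (at S) \<and>
        ((\<lambda>x. Us t x) has_real_derivative Uss t S) (at S) \<and>
        Ut t S + \<sigma>\<^sup>2 / 2 * S\<^sup>2 * Uss t S + \<mu> * S * Us t S - k * U t S = F t S)"

end

theory Submission
  imports Defs
begin

text \<open>The risk-free price \<open>V\<close> is a Gaussian average of the non-negative payoff, so \<open>V \<ge> 0\<close>.
  Hence \<open>V\<^sup>- = 0\<close>, \<open>V\<^sup>+ = V\<close>, and the source term of the adjusted problem collapses to \<open>-b V\<close>
  with \<open>b = \<lambda>\<^sub>B + R\<^sub>C \<lambda>\<^sub>C - s\<^sub>F\<close>. Looking for \<open>U = g(t) V\<close>, the product rule reduces the PDE for \<open>U\<close>
  to the PDE for \<open>V\<close> plus the scalar equation \<open>g' = (\<lambda>\<^sub>B + \<lambda>\<^sub>C) g - b\<close> with \<open>g(T) = 1\<close>, whose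
  solution is the stated factor. The integrability hypotheses on \<open>H\<close> only make \<open>V\<close> meaningful;
  the argument itself uses just \<open>H \<ge> 0\<close> and the PDE for \<open>V\<close>.\<close>

lemma bs_price_nonneg:
  assumes "\<And>x. x > 0 \<Longrightarrow> 0 \<le> H x" and "S > 0"
  shows "0 \<le> bs_price r qS gS \<sigma> T H t S"
proof -
  have "0 \<le> H (S * exp ((qS - gS - \<sigma>\<^sup>2 / 2) * (T - t) + \<sigma> * sqrt (T - t) * z))
              * (exp (- z\<^sup>2 / 2) / sqrt (2 * pi))" for z
    using assms by (intro mult_nonneg_nonneg) auto
  then have "0 \<le> (LINT z|lborel. H (S * exp ((qS - gS - \<sigma>\<^sup>2 / 2) * (T - t) + \<sigma> * sqrt (T - t) * z))
                      * (exp (- z\<^sup>2 / 2) / sqrt (2 * pi)))"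
    by (intro integral_nonneg_AE AE_I2) blast
  then show ?thesis
    unfolding bs_price_def by (intro mult_nonneg_nonneg) auto
qed

lemma fvp_solution_time_scaling:
  assumes V: "fvp_solution T \<sigma> \<mu> k F G V"
    and g: "\<And>t. (g has_real_derivative g' t) (at t)" and gT: "g T = 1"
    and F': "\<And>t S. t \<in> {0<..<T} \<Longrightarrow> S > 0 \<Longrightarrow> F' t S = g t * F t S + (g' t - L * g t) * V t S"
  shows "fvp_solution T \<sigma> \<mu> (k + L) F' G (\<lambda>t S. g t * V t S)"
proof -
  obtain Vt Vs Vss where VT: "\<forall>S>0. V T S = G S"
    and Vd: "\<forall>t\<in>{0<..<T}. \<forall>S>0.
        ((\<lambda>\<tau>. V \<tau> S) has_real_derivative Vt t S) (at t) \<and>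
        ((\<lambda>x. V t x) has_real_derivative Vs t S) (at S) \<and>
        ((\<lambda>x. Vs t x) has_real_derivative Vss t S) (at S) \<and>
        Vt t S + \<sigma>\<^sup>2 / 2 * S\<^sup>2 * Vss t S + \<mu> * S * Vs t S - k * V t S = F t S"
    using V unfolding fvp_solution_def by blast
  have "((\<lambda>\<tau>. g \<tau> * V \<tau> S) has_real_derivative g' t * V t S + g t * Vt t S) (at t) \<and>
        ((\<lambda>x. g t * V t x) has_real_derivative g t * Vs t S) (at S) \<and>
        ((\<lambda>x. g t * Vs t x) has_real_derivative g t * Vss t S) (at S) \<and>
        g' t * V t S + g t * Vt t S + \<sigma>\<^sup>2 / 2 * S\<^sup>2 * (g t * Vss t S) + \<mu> * S * (g t * Vs t S)
          - (k + L) * (g t * V t S) = F' t S"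
    if t: "t \<in> {0<..<T}" and S: "S > 0" for t S
  proof -
    from Vd t S have Vt: "((\<lambda>\<tau>. V \<tau> S) has_real_derivative Vt t S) (at t)"
      and Vs: "((\<lambda>x. V t x) has_real_derivative Vs t S) (at S)"
      and Vss: "((\<lambda>x. Vs t x) has_real_derivative Vss t S) (at S)"
      and pde: "Vt t S + \<sigma>\<^sup>2 / 2 * S\<^sup>2 * Vss t S + \<mu> * S * Vs t S - k * V t S = F t S"
      by blast+
    have "g' t * V t S + g t * Vt t S + \<sigma>\<^sup>2 / 2 * S\<^sup>2 * (g t * Vss t S) + \<mu> * S * (g t * Vs t S)
            - (k + L) * (g t * V t S)
          = g t * (Vt t S + \<sigma>\<^sup>2 / 2 * S\<^sup>2 * Vss t S + \<mu> * S * Vs t S - k * V t S)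
            + (g' t - L * g t) * V t S"
      by (simp add: algebra_simps)
    also have "\<dots> = F' t S"
      using pde F' t S by simp
    finally show ?thesis
      using DERIV_mult[OF g Vt] DERIV_cmult[OF Vs] DERIV_cmult[OF Vss]
      by (simp add: mult.commute)
  qed
  then show ?thesis
    unfolding fvp_solution_def using VT gT
    by (intro conjI exI[of _ "\<lambda>t S. g' t * V t S + g t * Vt t S"] exI[of _ "\<lambda>t S. g t * Vs t S"]
        exI[of _ "\<lambda>t S. g t * Vss t S"]) auto
qed

lemma exp_relaxation_has_derivative:
  fixes L a b T :: real
  assumes "L \<noteq> 0"
  shows "((\<lambda>t. (a * exp (- L * (T - t)) + b) / L) has_real_derivative
            L * ((a * exp (- L * (T - t)) + b) / L) - b) (at t)"
  by (rule derivative_eq_intros refl | use assms in \<open>simp add: field_simps\<close>)+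

theorem mainTheorem1:
  fixes T r \<sigma> qS gS lamB lamC RB RC sF :: real
    and H :: "real \<Rightarrow> real"
    and V :: "real \<Rightarrow> real \<Rightarrow> real"
  assumes T: "T > 0" and r: "r > 0" and \<sigma>: "\<sigma> > 0"
    and lB: "lamB \<ge> 0" and lC: "lamC \<ge> 0" and lBC: "lamB + lamC > 0"
    and RB: "0 \<le> RB" "RB \<le> 1" and RC: "0 \<le> RC" "RC \<le> 1"
    and H_nonneg: "\<forall>S>0. H S \<ge> 0"
    and H_meas: "H \<in> borel_measurable borel"
    and H_locbdd: "\<forall>a b. 0 < a \<longrightarrow> (\<exists>M. \<forall>S\<in>{a..b}. \<bar>H S\<bar> \<le> M)"
    and H_lin: "\<exists>C S0. \<forall>S\<ge>S0. H S \<le> C * S"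
    and V_eq: "\<forall>t\<in>{0..T}. \<forall>S>0. V t S = bs_price r qS gS \<sigma> T H t S"
    and V_pde: "fvp_solution T \<sigma> (qS - gS) r (\<lambda>t S. 0) H V"
  shows "(\<forall>t\<in>{0..T}. \<forall>S>0. V t S \<ge> 0) \<and>
         fvp_solution T \<sigma> (qS - gS) (r + lamB + lamC)
           (\<lambda>t S. (RB * lamB + lamC) * max (- V t S) 0 - (lamB + RC * lamC) * max (V t S) 0
                  + sF * max (V t S) 0)
           H
           (\<lambda>t S. (((1 - RC) * lamC + sF) * exp (- (lamB + lamC) * (T - t)) + lamB + RC * lamC - sF)
                  / (lamB + lamC) * V t S)"
proof -
  have V_nonneg: "\<forall>t\<in>{0..T}. \<forall>S>0. V t S \<ge> 0"
    using V_eq bs_price_nonneg H_nonneg by simp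
  define L where "L = lamB + lamC"
  define a where "a = (1 - RC) * lamC + sF"
  define b where "b = lamB + RC * lamC - sF"
  define g where "g t = (a * exp (- L * (T - t)) + b) / L" for t
  have "L \<noteq> 0" using lBC by (simp add: L_def)
  then have g_deriv: "(g has_real_derivative L * g t - b) (at t)" for t
    unfolding g_def by (rule exp_relaxation_has_derivative)
  have gT: "g T = 1"
    using lBC by (simp add: g_def L_def a_def b_def field_simps)
  have source: "(RB * lamB + lamC) * max (- V t S) 0 - (lamB + RC * lamC) * max (V t S) 0
      + sF * max (V t S) 0 = g t * 0 + ((L * g t - b) - L * g t) * V t S"
    if "t \<in> {0<..<T}" "S > 0" for t S
  proof -
    have "V t S \<ge> 0" using V_nonneg that by simp
    then show ?thesis by (simp add: b_def max_absorb1 max_absorb2 algebra_simps)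
  qed
  have "fvp_solution T \<sigma> (qS - gS) (r + L)
      (\<lambda>t S. (RB * lamB + lamC) * max (- V t S) 0 - (lamB + RC * lamC) * max (V t S) 0
             + sF * max (V t S) 0) H (\<lambda>t S. g t * V t S)"
    by (rule fvp_solution_time_scaling[OF V_pde g_deriv gT source])
  moreover have "(\<lambda>t S. g t * V t S) = (\<lambda>t S. (((1 - RC) * lamC + sF) * exp (- (lamB + lamC) * (T - t))
      + lamB + RC * lamC - sF) / (lamB + lamC) * V t S)"
    by (simp add: g_def L_def a_def b_def algebra_simps)
  ultimately show ?thesis
    using V_nonneg by (simp add: L_def add.assoc)
qed

end
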